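(* Let $G$ and $H$ be graphs on the same number $n$ of vertices, and suppose $G$ is regular. If $\lambda(G)\ge\lambda(H)$, then for every integer $s\ge 1$, \[ \lambda(G\vee\overline{K}_s)\ge \lambda(H\vee\overline{K}_s). \]
   Context: $\lambda(\cdot)$ is the spectral radius of the adjacency matrix; $\overline{K}_s$ is the edgeless graph on $s$ vertices; $G\vee H$ denotes the join, obtained from disjoint copies of $G$ and $H$ by adding all edges between them. *)

theory Defs
  imports "Jordan_Normal_Form.Spectral_Radius"
begin

text \<open>A simple graph on the vertex set {0..<n}, given by an edge relation E
  (only its values on {0..<n} matter): symmetric and loopless.\<close>
definition simple_graph :: "nat \<Rightarrow> (nat \<Rightarrow> nat \<Rightarrow> bool) \<Rightarrow> bool" where
  "simple_graph n E \<longleftrightarrow> (\<forall>i<n. \<forall>j<n. E i j \<longleftrightarrow> E j i) \<and> (\<forall>i<n. \<not> E i i)"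

definition degree_in :: "nat \<Rightarrow> (nat \<Rightarrow> nat \<Rightarrow> bool) \<Rightarrow> nat \<Rightarrow> nat" where
  "degree_in n E i = card {j. j < n \<and> E i j}"

definition regular_graph :: "nat \<Rightarrow> (nat \<Rightarrow> nat \<Rightarrow> bool) \<Rightarrow> bool" where
  "regular_graph n E \<longleftrightarrow> (\<exists>d. \<forall>i<n. degree_in n E i = d)"

text \<open>Adjacency matrix (over the complex numbers, as required by the library's
  spectral radius).\<close>
definition adj_mat :: "nat \<Rightarrow> (nat \<Rightarrow> nat \<Rightarrow> bool) \<Rightarrow> complex mat" where
  "adj_mat n E = mat n n (\<lambda>(i,j). if E i j then 1 else 0)"

definition graph_spectral_radius :: "nat \<Rightarrow> (nat \<Rightarrow> nat \<Rightarrow> bool) \<Rightarrow> real" where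
  "graph_spectral_radius n E = spectral_radius (adj_mat n E)"

text \<open>Join of a graph on {0..<n} with the edgeless graph on s vertices; the
  result lives on {0..<n+s}, the new vertices being n, ..., n+s-1.\<close>
definition join_empty :: "nat \<Rightarrow> (nat \<Rightarrow> nat \<Rightarrow> bool) \<Rightarrow> nat \<Rightarrow> nat \<Rightarrow> bool" where
  "join_empty n E i j \<longleftrightarrow> (i < n \<and> j < n \<and> E i j) \<or> (i < n \<and> \<not> j < n) \<or> (\<not> i < n \<and> j < n)"

end

theory Submission
  imports Defs "HOL-Analysis.Convex"
begin

(* Let G be d-regular and rho the largest root of x^2 = d x + n s. The vector that is rho on the
   vertices of G and n on the s added vertices is an eigenvector of the join of G with s
   independent vertices, with eigenvalue rho; so that join has spectral radius at least rho.
   On the other side lambda(H) <= lambda(G) <= d. The moduli of an eigenvector of the join of H for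
   an eigenvalue of maximal modulus t form a nonnegative w <> 0 with t w <= A w entrywise.
   Bounding the part of A w coming from H by the Rayleigh quotient (at most d), and the sum of w
   over H by Cauchy-Schwarz, gives t^2 <= d t + n s, that is t <= rho.
   The Rayleigh bound x.Ax <= lambda(A) x.x for real symmetric A comes from power iteration: by
   Cauchy-Schwarz x.A^(2^m)x grows at least like (x.Ax / x.x)^(2^m) x.x, whereas the powers of
   A/r are bounded for every r > lambda(A). *)

definition matvec :: "(nat \<Rightarrow> nat \<Rightarrow> real) \<Rightarrow> nat \<Rightarrow> (nat \<Rightarrow> real) \<Rightarrow> nat \<Rightarrow> real" where
  "matvec a n x i = (\<Sum>j<n. a i j * x j)"

definition dot :: "nat \<Rightarrow> (nat \<Rightarrow> real) \<Rightarrow> (nat \<Rightarrow> real) \<Rightarrow> real" where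
  "dot n x y = (\<Sum>i<n. x i * y i)"

lemma dot_self_nonneg: "0 \<le> dot n x x"
  unfolding dot_def by (intro sum_nonneg) simp

lemma dot_self_eq_0_iff: "dot n x x = 0 \<longleftrightarrow> (\<forall>i<n. x i = 0)"
  unfolding dot_def by (subst sum_nonneg_eq_0_iff) auto

lemma dot_Cauchy_Schwarz: "(dot n x y)\<^sup>2 \<le> dot n x x * dot n y y"
  using Cauchy_Schwarz_ineq_sum[of x y "{..<n}"] by (simp add: dot_def power2_eq_square)

lemma dot_matvec_commute:
  assumes "\<And>i j. i < n \<Longrightarrow> j < n \<Longrightarrow> a i j = a j i"
  shows "dot n (matvec a n x) y = dot n x (matvec a n y)"
proof -
  have "dot n (matvec a n x) y = (\<Sum>i<n. \<Sum>j<n. a i j * x j * y i)"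
    unfolding dot_def matvec_def by (simp add: sum_distrib_right)
  also have "\<dots> = (\<Sum>j<n. \<Sum>i<n. a i j * x j * y i)"
    by (rule sum.swap)
  also have "\<dots> = dot n x (matvec a n y)"
    unfolding dot_def matvec_def using assms by (simp add: sum_distrib_left mult_ac)
  finally show ?thesis .
qed

lemma dot_iterate_matvec:
  assumes "\<And>i j. i < n \<Longrightarrow> j < n \<Longrightarrow> a i j = a j i"
  shows "dot n ((matvec a n ^^ j) x) ((matvec a n ^^ k) x) = dot n x ((matvec a n ^^ (j + k)) x)"
proof (induction j arbitrary: k)
  case 0
  show ?case by simp
next
  case (Suc j)
  have "dot n ((matvec a n ^^ Suc j) x) ((matvec a n ^^ k) x)
      = dot n ((matvec a n ^^ j) x) ((matvec a n ^^ Suc k) x)"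
    by (simp add: dot_matvec_commute[OF assms])
  also have "\<dots> = dot n x ((matvec a n ^^ (Suc j + k)) x)"
    using Suc.IH[of "Suc k"] by simp
  finally show ?case .
qed

lemma dot_iterate_power2_ge:
  assumes sym: "\<And>i j. i < n \<Longrightarrow> j < n \<Longrightarrow> a i j = a j i"
    and "0 < dot n x x" and "0 \<le> dot n x (matvec a n x)"
  shows "(dot n x (matvec a n x) / dot n x x) ^ 2 ^ m * dot n x x \<le> dot n x ((matvec a n ^^ 2 ^ m) x)"
proof (induction m)
  case 0
  show ?case
    using \<open>0 < dot n x x\<close> by simp
next
  case (Suc m)
  define q where "q k = dot n x ((matvec a n ^^ k) x)" for k
  define t where "t = dot n x (matvec a n x) / dot n x x"
  have "0 \<le> t"
    using assms(2,3) by (simp add: t_def)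
  have "q 0 * (t ^ 2 ^ Suc m * q 0) = (t ^ 2 ^ m * q 0)\<^sup>2"
    by (simp add: power2_eq_square power_mult_distrib power_mult mult_ac)
  also have "\<dots> \<le> (q (2 ^ m))\<^sup>2"
    using Suc.IH \<open>0 \<le> t\<close> \<open>0 < dot n x x\<close> by (intro power_mono) (simp_all add: q_def t_def)
  also have "\<dots> \<le> q 0 * q (2 ^ Suc m)"
    using dot_Cauchy_Schwarz[of n x "(matvec a n ^^ 2 ^ m) x"]
      dot_iterate_matvec[OF sym, where j = "2 ^ m" and k = "2 ^ m" and x = x]
    by (simp add: q_def mult_2)
  finally show ?case
    using \<open>0 < dot n x x\<close> by (simp add: q_def t_def)
qed

lemma dot_matvec_le_if_iterates_bounded:
  assumes sym: "\<And>i j. i < n \<Longrightarrow> j < n \<Longrightarrow> a i j = a j i"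
    and bounded: "\<And>k. dot n x ((matvec a n ^^ k) x) \<le> C"
  shows "dot n x (matvec a n x) \<le> dot n x x"
proof (rule ccontr)
  assume "\<not> ?thesis"
  then have gt: "dot n x x < dot n x (matvec a n x)"
    by simp
  have "dot n x x \<noteq> 0"
  proof
    assume "dot n x x = 0"
    then have "\<forall>i<n. x i = 0"
      by (simp add: dot_self_eq_0_iff)
    then have "dot n x (matvec a n x) = 0"
      by (simp add: dot_def)
    with gt \<open>dot n x x = 0\<close> show False
      by simp
  qed
  then have x: "0 < dot n x x"
    using dot_self_nonneg[of n x] by linarith
  define t where "t = dot n x (matvec a n x) / dot n x x"
  have t: "1 < t"
    using x gt by (simp add: t_def)
  obtain m where "C / dot n x x < t ^ m"
    using real_arch_pow[OF t] by blast
  also have "\<dots> \<le> t ^ 2 ^ m"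
    using t by (intro power_increasing) (auto intro: less_imp_le)
  finally have "C < t ^ 2 ^ m * dot n x x"
    using x by (simp add: field_simps)
  also have "\<dots> \<le> dot n x ((matvec a n ^^ 2 ^ m) x)"
    unfolding t_def using x gt by (intro dot_iterate_power2_ge[OF sym]) simp_all
  finally show False
    using bounded[of "2 ^ m"] by simp
qed

definition of_real_mat :: "nat \<Rightarrow> (nat \<Rightarrow> nat \<Rightarrow> real) \<Rightarrow> complex mat" where
  "of_real_mat n a = mat n n (\<lambda>(i, j). complex_of_real (a i j))"

definition of_real_vec :: "nat \<Rightarrow> (nat \<Rightarrow> real) \<Rightarrow> complex vec" where
  "of_real_vec n x = vec n (\<lambda>i. complex_of_real (x i))"

lemma of_real_mat_carrier [simp]: "of_real_mat n a \<in> carrier_mat n n"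
  by (simp add: of_real_mat_def)

lemma of_real_vec_carrier [simp]: "of_real_vec n x \<in> carrier_vec n"
  by (simp add: of_real_vec_def)

lemma of_real_mat_mult_vec: "of_real_mat n a *\<^sub>v of_real_vec n x = of_real_vec n (matvec a n x)"
  by (rule eq_vecI) (simp_all add: of_real_mat_def of_real_vec_def matvec_def scalar_prod_def atLeast0LessThan)

lemma of_real_mat_power_mult_vec:
  "of_real_mat n a ^\<^sub>m k *\<^sub>v of_real_vec n x = of_real_vec n ((matvec a n ^^ k) x)"
proof (induction k arbitrary: x)
  case 0
  show ?case by (simp add: of_real_mat_def)
next
  case (Suc k)
  have "of_real_mat n a ^\<^sub>m Suc k *\<^sub>v of_real_vec n x
      = of_real_mat n a ^\<^sub>m k *\<^sub>v (of_real_mat n a *\<^sub>v of_real_vec n x)"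
    by (simp del: assoc_mult_mat_vec add: assoc_mult_mat_vec[of _ n n _ n])
  also have "\<dots> = of_real_vec n ((matvec a n ^^ Suc k) x)"
    by (simp add: of_real_mat_mult_vec Suc.IH funpow_swap1)
  finally show ?case .
qed

lemma spectral_radius_nonneg:
  assumes "A \<in> carrier_mat n n" and "0 < n"
  shows "0 \<le> spectral_radius A"
  using spectral_radius_mem_max(1)[OF assms] by auto

lemma eigenvalue_smult_mat:
  fixes A :: "'a :: field mat"
  assumes A: "A \<in> carrier_mat n n" and "c \<noteq> 0" and "eigenvalue (c \<cdot>\<^sub>m A) e"
  shows "eigenvalue A (e / c)"
proof -
  obtain v where v: "v \<in> carrier_vec n" "v \<noteq> 0\<^sub>v n" and cAv: "(c \<cdot>\<^sub>m A) *\<^sub>v v = e \<cdot>\<^sub>v v"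
    using assms by (auto simp: eigenvalue_def eigenvector_def)
  have "(c \<cdot>\<^sub>m A) *\<^sub>v v = c \<cdot>\<^sub>v (A *\<^sub>v v)"
    by (rule eq_vecI) (use A v in \<open>auto simp: scalar_prod_def sum_distrib_left mult.assoc\<close>)
  then have "A *\<^sub>v v = inverse c \<cdot>\<^sub>v (e \<cdot>\<^sub>v v)"
    using \<open>c \<noteq> 0\<close> by (simp add: cAv[symmetric] smult_smult_assoc)
  also have "\<dots> = (e / c) \<cdot>\<^sub>v v"
    by (simp add: smult_smult_assoc divide_inverse mult.commute)
  finally show ?thesis
    using A v by (auto simp: eigenvalue_def eigenvector_def)
qed

lemma spectral_radius_smult_le:
  assumes A: "A \<in> carrier_mat n n" and n: "0 < n" and c: "c \<noteq> 0"
  shows "spectral_radius (c \<cdot>\<^sub>m A) \<le> norm c * spectral_radius A"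
proof -
  obtain e where "eigenvalue (c \<cdot>\<^sub>m A) e" and e: "spectral_radius (c \<cdot>\<^sub>m A) = norm e"
    using spectral_radius_mem_max(1)[of "c \<cdot>\<^sub>m A" n] A n by (auto simp: spectrum_def)
  then have "norm (e / c) \<le> spectral_radius A"
    using spectral_radius_mem_max(2)[OF A n] eigenvalue_smult_mat[OF A c] by (auto simp: spectrum_def)
  then show ?thesis
    using c by (simp add: e norm_divide field_simps)
qed

lemma abs_iterate_matvec_le:
  assumes bound: "norm_bound (of_real_mat n a ^\<^sub>m k) c" and i: "i < n"
  shows "\<bar>(matvec a n ^^ k) x i\<bar> \<le> c * (\<Sum>j<n. \<bar>x j\<bar>)"
proof -
  let ?P = "of_real_mat n a ^\<^sub>m k"
  have P: "?P \<in> carrier_mat n n"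
    by simp
  have "complex_of_real ((matvec a n ^^ k) x i) = (?P *\<^sub>v of_real_vec n x) $ i"
    using i by (simp only: of_real_mat_power_mult_vec) (simp add: of_real_vec_def)
  also have "\<dots> = (\<Sum>j<n. ?P $$ (i, j) * complex_of_real (x j))"
    using carrier_matD[OF P] i by (simp add: of_real_vec_def scalar_prod_def atLeast0LessThan)
  finally have "\<bar>(matvec a n ^^ k) x i\<bar> \<le> (\<Sum>j<n. norm (?P $$ (i, j)) * \<bar>x j\<bar>)"
    by (metis (no_types, lifting) norm_mult norm_of_real norm_sum sum.cong)
  also have "\<dots> \<le> (\<Sum>j<n. c * \<bar>x j\<bar>)"
  proof (intro sum_mono mult_right_mono)
    fix j assume "j \<in> {..<n}"
    then show "norm (?P $$ (i, j)) \<le> c"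
      using bound carrier_matD[OF P] i unfolding norm_bound_def by auto
  qed simp
  finally show ?thesis
    by (simp add: sum_distrib_left)
qed

lemma dot_iterates_bounded:
  assumes "spectral_radius (of_real_mat n a) < 1"
  obtains C where "\<And>k. dot n x ((matvec a n ^^ k) x) \<le> C"
proof -
  obtain c where c: "\<And>k. norm_bound (of_real_mat n a ^\<^sub>m k) c"
    using spectral_radius_jnf_norm_bound_less_1_upper_triangular[OF of_real_mat_carrier assms] by blast
  define X where "X = (\<Sum>j<n. \<bar>x j\<bar>)"
  have "dot n x ((matvec a n ^^ k) x) \<le> (\<Sum>i<n. \<bar>x i\<bar> * (c * X))" for k
    unfolding dot_def
  proof (rule sum_mono)
    fix i assume "i \<in> {..<n}"
    then have "\<bar>x i * (matvec a n ^^ k) x i\<bar> \<le> \<bar>x i\<bar> * (c * X)"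
      unfolding X_def using abs_iterate_matvec_le[OF c] by (simp add: abs_mult mult_left_mono)
    then show "x i * (matvec a n ^^ k) x i \<le> \<bar>x i\<bar> * (c * X)"
      by linarith
  qed
  then show ?thesis
    by (rule that)
qed

lemma dot_matvec_le_spectral_radius:
  assumes sym: "\<And>i j. i < n \<Longrightarrow> j < n \<Longrightarrow> a i j = a j i"
  shows "dot n x (matvec a n x) \<le> spectral_radius (of_real_mat n a) * dot n x x"
proof (cases "dot n x x = 0")
  case True
  then have "\<forall>i<n. x i = 0"
    by (simp add: dot_self_eq_0_iff)
  then show ?thesis
    by (simp add: dot_def)
next
  case False
  then have "0 < n"
    by (auto simp: dot_def intro: gr0I)
  have x: "0 < dot n x x"
    using False dot_self_nonneg[of n x] by linarith
  define \<rho> where "\<rho> = spectral_radius (of_real_mat n a)"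
  have "dot n x (matvec a n x) / dot n x x \<le> r" if r: "\<rho> < r" for r
  proof -
    have "0 < r"
      using r spectral_radius_nonneg[OF of_real_mat_carrier[of n a] \<open>0 < n\<close>] unfolding \<rho>_def by linarith
    have scaled: "of_real_mat n (\<lambda>i j. a i j / r) = complex_of_real (1 / r) \<cdot>\<^sub>m of_real_mat n a"
      by (rule eq_matI) (auto simp: of_real_mat_def)
    have "spectral_radius (of_real_mat n (\<lambda>i j. a i j / r)) \<le> \<rho> / r"
      using spectral_radius_smult_le[OF of_real_mat_carrier \<open>0 < n\<close>, of "complex_of_real (1 / r)" a]
        \<open>0 < r\<close> by (simp add: scaled \<rho>_def norm_divide abs_of_pos)
    also have "\<dots> < 1"
      using r \<open>0 < r\<close> by simp
    finally obtain C where "\<And>k. dot n x ((matvec (\<lambda>i j. a i j / r) n ^^ k) x) \<le> C"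
      using dot_iterates_bounded[where x = x] by blast
    then have "dot n x (matvec (\<lambda>i j. a i j / r) n x) \<le> dot n x x"
      by (rule dot_matvec_le_if_iterates_bounded[rotated]) (simp add: sym)
    moreover have "dot n x (matvec (\<lambda>i j. a i j / r) n x) = dot n x (matvec a n x) / r"
      by (simp add: dot_def matvec_def sum_divide_distrib sum_distrib_left)
    ultimately show ?thesis
      using x \<open>0 < r\<close> by (simp add: field_simps)
  qed
  then have "dot n x (matvec a n x) / dot n x x \<le> \<rho>"
    by (rule dense_ge)
  then show ?thesis
    using x by (simp add: \<rho>_def field_simps)
qed

lemma nonneg_subeigenvector_spectral_radius:
  assumes "0 < n" and nonneg: "\<And>i j. i < n \<Longrightarrow> j < n \<Longrightarrow> 0 \<le> a i j"
  obtains w where "\<And>i. 0 \<le> w i" and "\<exists>i<n. w i \<noteq> 0"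
    and "\<And>i. i < n \<Longrightarrow> spectral_radius (of_real_mat n a) * w i \<le> matvec a n w i"
proof -
  let ?A = "of_real_mat n a"
  obtain \<mu> where "\<mu> \<in> spectrum ?A" and \<mu>: "spectral_radius ?A = norm \<mu>"
    using spectral_radius_mem_max(1)[OF of_real_mat_carrier \<open>0 < n\<close>] by auto
  then obtain v where v: "v \<in> carrier_vec n" "v \<noteq> 0\<^sub>v n" and Av: "?A *\<^sub>v v = \<mu> \<cdot>\<^sub>v v"
    by (auto simp: spectrum_def eigenvalue_def eigenvector_def carrier_matD[OF of_real_mat_carrier])
  define w where "w i = norm (v $ i)" for i
  have "spectral_radius ?A * w i \<le> matvec a n w i" if i: "i < n" for i
  proof -
    have "\<mu> * v $ i = (\<Sum>j<n. ?A $$ (i, j) * v $ j)"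
      using arg_cong[OF Av, of "\<lambda>u. u $ i"] i v carrier_matD[OF of_real_mat_carrier]
      by (simp add: scalar_prod_def atLeast0LessThan)
    then have "spectral_radius ?A * w i = norm (\<Sum>j<n. ?A $$ (i, j) * v $ j)"
      by (metis \<mu> norm_mult w_def)
    also have "\<dots> \<le> (\<Sum>j<n. norm (?A $$ (i, j) * v $ j))"
      by (rule norm_sum)
    also have "\<dots> = matvec a n w i"
      using i nonneg by (simp add: matvec_def w_def norm_mult of_real_mat_def)
    finally show ?thesis .
  qed
  moreover have "\<exists>i<n. w i \<noteq> 0"
  proof (rule ccontr)
    assume "\<not> ?thesis"
    then have "v = 0\<^sub>v n"
      using v(1) by (intro eq_vecI) (auto simp: w_def)
    with v(2) show False ..
  qed
  ultimately show ?thesis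
    using that[of w] by (simp add: w_def)
qed

lemma spectral_radius_le_row_sum:
  assumes "0 < n" and nonneg: "\<And>i j. i < n \<Longrightarrow> j < n \<Longrightarrow> 0 \<le> a i j"
    and row_sum: "\<And>i. i < n \<Longrightarrow> (\<Sum>j<n. a i j) \<le> d"
  shows "spectral_radius (of_real_mat n a) \<le> d"
proof -
  obtain w where w: "\<And>i. 0 \<le> w i" "\<exists>i<n. w i \<noteq> 0"
    and sub: "\<And>i. i < n \<Longrightarrow> spectral_radius (of_real_mat n a) * w i \<le> matvec a n w i"
    using nonneg_subeigenvector_spectral_radius[where n=n and a=a, OF assms(1) nonneg] by blast
  obtain m where m: "m < n" and m_max: "w m = Max (w ` {..<n})"
    using Max_in[of "w ` {..<n}"] \<open>0 < n\<close> by fastforce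
  have max: "w j \<le> w m" if "j < n" for j
    using that by (simp add: m_max)
  have "0 < w m"
  proof -
    obtain i where "i < n" "w i \<noteq> 0"
      using w(2) by blast
    then show ?thesis
      using w(1)[of i] max[of i] by linarith
  qed
  have "spectral_radius (of_real_mat n a) * w m \<le> matvec a n w m"
    using sub[OF m] .
  also have "\<dots> \<le> (\<Sum>j<n. a m j) * w m"
    unfolding matvec_def sum_distrib_right using nonneg m max by (intro sum_mono mult_left_mono) auto
  also have "\<dots> \<le> d * w m"
    using row_sum[OF m] \<open>0 < w m\<close> by (simp add: mult_right_mono)
  finally show ?thesis
    using \<open>0 < w m\<close> by simp
qed

lemma le_spectral_radius_of_real_eigenvector:
  assumes eigen: "\<And>i. i < n \<Longrightarrow> matvec a n w i = \<mu> * w i" and "k < n" and "w k \<noteq> 0"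
  shows "\<mu> \<le> spectral_radius (of_real_mat n a)"
proof -
  have "of_real_mat n a *\<^sub>v of_real_vec n w = of_real_vec n (matvec a n w)"
    by (rule of_real_mat_mult_vec)
  also have "\<dots> = complex_of_real \<mu> \<cdot>\<^sub>v of_real_vec n w"
    by (rule eq_vecI) (simp_all add: of_real_vec_def eigen)
  finally have "of_real_mat n a *\<^sub>v of_real_vec n w = complex_of_real \<mu> \<cdot>\<^sub>v of_real_vec n w" .
  moreover have "of_real_vec n w \<noteq> 0\<^sub>v n"
    using assms(2,3) by (auto simp: of_real_vec_def dest: arg_cong[of _ _ "\<lambda>v. v $ k"])
  ultimately have "complex_of_real \<mu> \<in> spectrum (of_real_mat n a)"
    unfolding spectrum_def eigenvalue_def eigenvector_def
    by (auto simp: carrier_matD[OF of_real_mat_carrier] intro!: exI[of _ "of_real_vec n w"])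
  then have "norm (complex_of_real \<mu>) \<in> norm ` spectrum (of_real_mat n a)"
    by (rule imageI)
  with \<open>k < n\<close> have "norm (complex_of_real \<mu>) \<le> spectral_radius (of_real_mat n a)"
    by (intro spectral_radius_mem_max(2)[OF of_real_mat_carrier]) auto
  then show ?thesis
    by simp
qed

definition adj_weight :: "(nat \<Rightarrow> nat \<Rightarrow> bool) \<Rightarrow> nat \<Rightarrow> nat \<Rightarrow> real" where
  "adj_weight E i j = (if E i j then 1 else 0)"

lemma adj_weight_nonneg: "0 \<le> adj_weight E i j"
  by (simp add: adj_weight_def)

lemma adj_weight_symmetric:
  assumes "simple_graph n E" and "i < n" and "j < n"
  shows "adj_weight E i j = adj_weight E j i"
  using assms by (simp add: simple_graph_def adj_weight_def)

lemma graph_spectral_radius_eq: "graph_spectral_radius n E = spectral_radius (of_real_mat n (adj_weight E))"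
proof -
  have "adj_mat n E = of_real_mat n (adj_weight E)"
    by (rule eq_matI) (auto simp: adj_mat_def of_real_mat_def adj_weight_def)
  then show ?thesis
    by (simp add: graph_spectral_radius_def)
qed

lemma dot_adj_weight_le_graph_spectral_radius:
  assumes "simple_graph n E"
  shows "dot n x (matvec (adj_weight E) n x) \<le> graph_spectral_radius n E * dot n x x"
  unfolding graph_spectral_radius_eq
  by (rule dot_matvec_le_spectral_radius) (rule adj_weight_symmetric[OF assms])

lemma matvec_adj_weight: "matvec (adj_weight E) n x i = (\<Sum>j | j < n \<and> E i j. x j)"
proof -
  have "matvec (adj_weight E) n x i = (\<Sum>j<n. if E i j then x j else 0)"
    unfolding matvec_def adj_weight_def by (intro sum.cong) auto
  also have "\<dots> = (\<Sum>j | j < n \<and> E i j. x j)"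
    by (simp add: sum.inter_filter[symmetric] lessThan_def conj_commute)
  finally show ?thesis .
qed

lemma matvec_adj_weight_const: "matvec (adj_weight E) n (\<lambda>_. c) i = real (degree_in n E i) * c"
  by (simp add: matvec_adj_weight degree_in_def)

lemma graph_spectral_radius_le_degree:
  assumes "0 < n" and "\<And>i. i < n \<Longrightarrow> degree_in n E i \<le> d"
  shows "graph_spectral_radius n E \<le> real d"
  unfolding graph_spectral_radius_eq
proof (rule spectral_radius_le_row_sum[OF \<open>0 < n\<close> adj_weight_nonneg])
  fix i assume "i < n"
  then show "(\<Sum>j<n. adj_weight E i j) \<le> real d"
    using matvec_adj_weight_const[of E n 1 i] assms(2)[of i] by (simp add: matvec_def)
qed

lemma matvec_join_empty:
  "matvec (adj_weight (join_empty n E)) (n + s) w i =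
    (if i < n then matvec (adj_weight E) n w i + (\<Sum>j = n..<n + s. w j) else (\<Sum>j<n. w j))"
proof -
  have "matvec (adj_weight (join_empty n E)) (n + s) w i
      = (\<Sum>j<n. adj_weight (join_empty n E) i j * w j)
        + (\<Sum>j = n..<n + s. adj_weight (join_empty n E) i j * w j)"
    unfolding matvec_def atLeast0LessThan[symmetric] by (simp add: sum.atLeastLessThan_concat)
  then show ?thesis
    by (simp add: matvec_def adj_weight_def join_empty_def)
qed

definition largest_root :: "real \<Rightarrow> real \<Rightarrow> real" where
  "largest_root d m = (d + sqrt (d\<^sup>2 + 4 * m)) / 2"

lemma largest_root_eq:
  assumes "0 \<le> m"
  shows "(largest_root d m)\<^sup>2 = d * largest_root d m + m"
proof -
  have "(sqrt (d\<^sup>2 + 4 * m))\<^sup>2 = d\<^sup>2 + 4 * m"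
    using assms by simp
  then show ?thesis
    by (simp add: largest_root_def power2_eq_square field_simps)
qed

lemma le_largest_root:
  assumes "0 \<le> m" and "t\<^sup>2 \<le> d * t + m"
  shows "t \<le> largest_root d m"
proof (rule ccontr)
  assume "\<not> ?thesis"
  moreover have "0 \<le> sqrt (d\<^sup>2 + 4 * m)"
    using assms(1) by simp
  then have "d - largest_root d m \<le> largest_root d m"
    unfolding largest_root_def by (simp add: field_simps)
  ultimately have "0 < (t - largest_root d m) * (t - (d - largest_root d m))"
    by (intro mult_pos_pos) auto
  also have "\<dots> = t\<^sup>2 - d * t - m"
    using largest_root_eq[OF assms(1), of d] by (simp add: power2_eq_square algebra_simps)
  finally show False
    using assms(2) by simp
qed

lemma largest_root_le_graph_spectral_radius_join_empty:
  assumes "0 < n" and "0 < s" and degree: "\<And>i. i < n \<Longrightarrow> degree_in n E i = d"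
  shows "largest_root (real d) (real n * real s) \<le> graph_spectral_radius (n + s) (join_empty n E)"
proof -
  define \<rho> where "\<rho> = largest_root (real d) (real n * real s)"
  define w where "w i = (if i < n then \<rho> else real n)" for i
  have "matvec (adj_weight (join_empty n E)) (n + s) w i = \<rho> * w i" if "i < n + s" for i
  proof (cases "i < n")
    case True
    have "matvec (adj_weight E) n w i = matvec (adj_weight E) n (\<lambda>_. \<rho>) i"
      by (simp add: matvec_def w_def)
    then show ?thesis
      using True degree[OF True] largest_root_eq[of "real n * real s" "real d"]
      by (simp add: matvec_join_empty matvec_adj_weight_const w_def \<rho>_def power2_eq_square)
  next
    case False
    then show ?thesis
      by (simp add: matvec_join_empty w_def)
  qed
  moreover have "n < n + s" and "w n \<noteq> 0"
    using \<open>0 < n\<close> \<open>0 < s\<close> by (simp_all add: w_def)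
  ultimately show ?thesis
    unfolding graph_spectral_radius_eq \<rho>_def by (rule le_spectral_radius_of_real_eigenvector)
qed

lemma join_empty_subeigenvector_quadratic:
  assumes "simple_graph n E" and "graph_spectral_radius n E \<le> d"
    and w0: "\<And>i. 0 \<le> w i" and "0 \<le> t"
    and sub: "\<And>i. i < n + s \<Longrightarrow> t * w i \<le> matvec (adj_weight (join_empty n E)) (n + s) w i"
  shows "t\<^sup>2 * dot n w w \<le> (d * t + real n * real s) * dot n w w"
proof -
  define S where "S = (\<Sum>j<n. w j)"
  define Y where "Y = (\<Sum>j = n..<n + s. w j)"
  have "0 \<le> S"
    using w0 by (simp add: S_def sum_nonneg)
  have "dot n w (matvec (adj_weight E) n w) \<le> graph_spectral_radius n E * dot n w w"
    using assms(1) by (rule dot_adj_weight_le_graph_spectral_radius)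
  also have "\<dots> \<le> d * dot n w w"
    using assms(2) dot_self_nonneg by (rule mult_right_mono)
  finally have rayleigh: "dot n w (matvec (adj_weight E) n w) \<le> d * dot n w w" .
  have "t * dot n w w = (\<Sum>i<n. w i * (t * w i))"
    by (simp add: dot_def sum_distrib_left mult_ac)
  also have "\<dots> \<le> (\<Sum>i<n. w i * (matvec (adj_weight E) n w i + Y))"
  proof (rule sum_mono)
    fix i assume "i \<in> {..<n}"
    then have "t * w i \<le> matvec (adj_weight E) n w i + Y"
      using sub[of i] by (simp add: matvec_join_empty Y_def)
    then show "w i * (t * w i) \<le> w i * (matvec (adj_weight E) n w i + Y)"
      using w0[of i] by (rule mult_left_mono)
  qed
  also have "\<dots> = dot n w (matvec (adj_weight E) n w) + Y * S"
    by (simp add: dot_def S_def distrib_left sum.distrib sum_distrib_left mult_ac)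
  finally have low: "t * dot n w w \<le> d * dot n w w + Y * S"
    using rayleigh by linarith
  have "t * Y = (\<Sum>i = n..<n + s. t * w i)"
    by (simp add: Y_def sum_distrib_left)
  also have "\<dots> \<le> (\<Sum>i = n..<n + s. S)"
  proof (rule sum_mono)
    fix i assume "i \<in> {n..<n + s}"
    then show "t * w i \<le> S"
      using sub[of i] by (simp add: matvec_join_empty S_def)
  qed
  finally have high: "t * Y \<le> real s * S"
    by simp
  have Cauchy_Schwarz: "S\<^sup>2 \<le> real n * dot n w w"
    using dot_Cauchy_Schwarz[of n "\<lambda>_. 1" w] by (simp add: dot_def S_def)
  have "t\<^sup>2 * dot n w w \<le> t * (d * dot n w w + Y * S)"
    using low \<open>0 \<le> t\<close> by (simp add: power2_eq_square mult.assoc mult_left_mono)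
  also have "\<dots> = d * t * dot n w w + (t * Y) * S"
    by (simp add: algebra_simps)
  also have "\<dots> \<le> d * t * dot n w w + real s * S\<^sup>2"
    using high \<open>0 \<le> S\<close> by (simp add: power2_eq_square mult_right_mono flip: mult.assoc)
  also have "\<dots> \<le> d * t * dot n w w + real s * (real n * dot n w w)"
    using Cauchy_Schwarz by (simp add: mult_left_mono)
  finally show ?thesis
    by (simp add: algebra_simps)
qed

lemma graph_spectral_radius_join_empty_le_largest_root:
  assumes "0 < n" and "simple_graph n E" and "graph_spectral_radius n E \<le> d"
  shows "graph_spectral_radius (n + s) (join_empty n E) \<le> largest_root d (real n * real s)"
proof -
  define t where "t = graph_spectral_radius (n + s) (join_empty n E)"
  obtain w where w0: "\<And>i. 0 \<le> w i" and "\<exists>i<n + s. w i \<noteq> 0"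
    and sub: "\<And>i. i < n + s \<Longrightarrow> t * w i \<le> matvec (adj_weight (join_empty n E)) (n + s) w i"
    using nonneg_subeigenvector_spectral_radius[where n = "n + s" and a = "adj_weight (join_empty n E)"]
      \<open>0 < n\<close> adj_weight_nonneg unfolding t_def graph_spectral_radius_eq by blast
  have "0 \<le> t"
    unfolding t_def graph_spectral_radius_eq
    using \<open>0 < n\<close> by (intro spectral_radius_nonneg[OF of_real_mat_carrier]) simp
  have "t\<^sup>2 \<le> d * t + real n * real s"
  proof (cases "dot n w w = 0")
    case False
    then have "0 < dot n w w"
      using dot_self_nonneg[of n w] by linarith
    with join_empty_subeigenvector_quadratic[OF assms(2,3) w0 \<open>0 \<le> t\<close> sub] show ?thesis
      by simp
  next
    case True
    then have low: "\<forall>i<n. w i = 0"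
      by (simp add: dot_self_eq_0_iff)
    obtain i where i: "i < n + s" "w i \<noteq> 0"
      using \<open>\<exists>i<n + s. w i \<noteq> 0\<close> by blast
    have "\<not> i < n"
      using low i(2) by blast
    moreover have "(\<Sum>j<n. w j) = 0"
      using low by (intro sum.neutral) simp
    ultimately have "t * w i \<le> 0"
      using sub[OF i(1)] by (simp add: matvec_join_empty)
    then have "t = 0"
      using w0[of i] i(2) \<open>0 \<le> t\<close> by (simp add: mult_le_0_iff)
    then show ?thesis
      by simp
  qed
  then show ?thesis
    using le_largest_root[of "real n * real s" t d] by (simp add: t_def)
qed

theorem theorem5p2:
  fixes n s :: nat and EG EH :: "nat \<Rightarrow> nat \<Rightarrow> bool"
  assumes "simple_graph n EG" and "simple_graph n EH"
    and "regular_graph n EG"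
    and "graph_spectral_radius n EG \<ge> graph_spectral_radius n EH"
    and "s \<ge> 1"
  shows "graph_spectral_radius (n + s) (join_empty n EG)
           \<ge> graph_spectral_radius (n + s) (join_empty n EH)"
proof (cases "n = 0")
  case True
  then have "join_empty n EG = join_empty n EH"
    by (simp add: join_empty_def fun_eq_iff)
  then show ?thesis
    by simp
next
  case False
  then have "0 < n"
    by simp
  \<comment> \<open>Only the row sums of G enter.\<close>
  obtain d where d: "\<And>i. i < n \<Longrightarrow> degree_in n EG i = d"
    using assms(3) unfolding regular_graph_def by blast
  have "graph_spectral_radius n EH \<le> real d"
    using assms(4) graph_spectral_radius_le_degree[OF \<open>0 < n\<close>, of EG d] d by simp
  then have "graph_spectral_radius (n + s) (join_empty n EH) \<le> largest_root (real d) (real n * real s)"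
    by (rule graph_spectral_radius_join_empty_le_largest_root[OF \<open>0 < n\<close> assms(2)])
  also have "\<dots> \<le> graph_spectral_radius (n + s) (join_empty n EG)"
    using assms(5) d by (intro largest_root_le_graph_spectral_radius_join_empty[OF \<open>0 < n\<close>]) simp_all
  finally show ?thesis .
qed

end
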